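(* For every graph $G=(V,E)$ with $V=\{1,\dots,n\}$ we have $\vartheta_2(G)=\vartheta_2'(G)$, where $$\vartheta_2'(G)=\max\Big\{\sum_{i=1}^n c(v_i,v_0)\Big\}$$ with the maximum taken over all integers $d\geq1$ and all families $(v_0,v_1,\dots,v_n)$ of vectors in $\mathbb R^d$ such that $\langle v_0,v_i\rangle\geq0$ for all $i$ and $\langle v_i,v_j\rangle\leq0$ whenever $\{i,j\}\in E$.
   Context: For $x,y\in\mathbb R^d$, $c(x,y)=\langle x,y\rangle^2\|x\|^{-2}\|y\|^{-2}$ if $x,y\neq0$ and $c(x,y)=0$ otherwise. For a graph $H$ on $\{1,\dots,n\}$ and real $k>1$, a rigid vector $k$-coloring of $H$ is an $n$-tuple of unit vectors $(u_1,\dots,u_n)$ in $\mathbb R^n$ with $\langle u_i,u_j\rangle=-1/(k-1)$ for all edges $\{i,j\}$ of $H$ and $\langle u_i,u_j\rangle\geq-1/(k-1)$ for all non-adjacent $i\neq j$; $\bar\vartheta_2(H)$ is the infimum of $k>1$ such that $H$ admits a rigid vector $k$-coloring, and $\vartheta_2(G)=\bar\vartheta_2(\bar G)$ where $\bar G$ is the complement of $G$. *)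

theory Defs
  imports Complex_Main
begin

text \<open>Vectors of \<real>^d are represented as functions nat \<Rightarrow> real, of which only the
  coordinates 0..d-1 are used.\<close>

definition ip :: "nat \<Rightarrow> (nat \<Rightarrow> real) \<Rightarrow> (nat \<Rightarrow> real) \<Rightarrow> real" where
  "ip d x y = (\<Sum>k<d. x k * y k)"

definition cfun :: "nat \<Rightarrow> (nat \<Rightarrow> real) \<Rightarrow> (nat \<Rightarrow> real) \<Rightarrow> real" where
  "cfun d x y = (if ip d x x \<noteq> 0 \<and> ip d y y \<noteq> 0
                 then (ip d x y)\<^sup>2 / (ip d x x * ip d y y) else 0)"

definition graph_on :: "nat \<Rightarrow> nat set set \<Rightarrow> bool" where
  "graph_on n E \<longleftrightarrow> E \<subseteq> {{i, j} | i j. i \<noteq> j \<and> i \<in> {1..n} \<and> j \<in> {1..n}}"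

definition complement :: "nat \<Rightarrow> nat set set \<Rightarrow> nat set set" where
  "complement n E = {{i, j} | i j. i \<noteq> j \<and> i \<in> {1..n} \<and> j \<in> {1..n} \<and> {i, j} \<notin> E}"

definition rigid_vector_coloring ::
  "nat \<Rightarrow> nat set set \<Rightarrow> real \<Rightarrow> (nat \<Rightarrow> nat \<Rightarrow> real) \<Rightarrow> bool" where
  "rigid_vector_coloring n H k u \<longleftrightarrow>
     (\<forall>i\<in>{1..n}. ip n (u i) (u i) = 1) \<and>
     (\<forall>i\<in>{1..n}. \<forall>j\<in>{1..n}. {i, j} \<in> H \<longrightarrow> ip n (u i) (u j) = - 1 / (k - 1)) \<and>
     (\<forall>i\<in>{1..n}. \<forall>j\<in>{1..n}. i \<noteq> j \<and> {i, j} \<notin> H \<longrightarrow> ip n (u i) (u j) \<ge> - 1 / (k - 1))"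

definition theta2_bar :: "nat \<Rightarrow> nat set set \<Rightarrow> real" where
  "theta2_bar n H = Inf {k. k > 1 \<and> (\<exists>u. rigid_vector_coloring n H k u)}"

definition theta2 :: "nat \<Rightarrow> nat set set \<Rightarrow> real" where
  "theta2 n G = theta2_bar n (complement n G)"

definition theta2'_values :: "nat \<Rightarrow> nat set set \<Rightarrow> real set" where
  "theta2'_values n E = {(\<Sum>i=1..n. cfun d (v i) (v 0)) | d v.
       d \<ge> 1 \<and>
       (\<forall>i\<in>{1..n}. ip d (v 0) (v i) \<ge> 0) \<and>
       (\<forall>i\<in>{1..n}. \<forall>j\<in>{1..n}. {i, j} \<in> E \<longrightarrow> ip d (v i) (v j) \<le> 0)}"

definition theta2' :: "nat \<Rightarrow> nat set set \<Rightarrow> real" where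
  "theta2' n E = Sup (theta2'_values n E)"

end

theory Submission
  imports Defs "HOL-Analysis.Analysis"
begin

text \<open>The inequality theta2' \<le> theta2 is weak duality. If u is a rigid vector k-coloring of the
  complement, the matrix 1 + (k - 1) <u i, u j> is positive semidefinite, equal to k on the diagonal,
  zero on the non-edges and nonnegative on the edges of G. By the Schur product theorem it pairs
  nonnegatively with the Gram matrix of the projections w i of v 0 onto the lines of the v i, which
  gives |\<Sum> w i|^2 \<le> k \<Sum> |w i|^2 and hence \<Sum> c(v i, v 0) \<le> k.

  Conversely, it suffices to find a positive semidefinite B of trace 1 that is nonpositive on the
  edges and has entry sum at least theta2: its Gram vectors b i together with v 0 = \<Sum> b i attain
  theta2. Such a B is obtained by minimising the squared constraint violation over the compact
  convex set of trace-1 positive semidefinite matrices. If the minimum were positive, the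
  first-order optimality condition at the minimiser would produce t < theta2 and L \<ge> 0 supported
  on the edges with t I + L - J positive semidefinite, that is, a rigid vector coloring of the
  complement with fewer than theta2 colors.\<close>

section \<open>Inner products on the first d coordinates\<close>

lemma ip_self_nonneg: "0 \<le> ip d x x"
  unfolding ip_def by (auto intro: sum_nonneg)

lemma ip_commute: "ip d x y = ip d y x"
  unfolding ip_def by (simp add: mult.commute)

lemma ip_Cauchy_Schwarz: "(ip d x y)\<^sup>2 \<le> ip d x x * ip d y y"
  using Cauchy_Schwarz_ineq_sum[of x y "{..<d}"] unfolding ip_def by (simp add: power2_eq_square)

lemma ip_eq_0_if_self_eq_0: "ip d x x = 0 \<Longrightarrow> ip d x y = 0"
  using ip_Cauchy_Schwarz[of d x y] by simp

lemma ip_Suc: "ip (Suc d) x y = ip d x y + x d * y d"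
  unfolding ip_def by simp

lemma ip_fun_upd_left: "ip d (x(d := c)) y = ip d x y"
  and ip_fun_upd_right: "ip d x (y(d := c)) = ip d x y"
  unfolding ip_def by (auto intro!: sum.cong)

lemma ip_zero_left: "ip d (\<lambda>_. 0) y = 0"
  unfolding ip_def by simp

lemma ip_scale_right: "ip d x (\<lambda>q. b * y q) = b * ip d x y"
  unfolding ip_def by (simp add: sum_distrib_left mult_ac)

lemma ip_scale: "ip d (\<lambda>q. a * x q) (\<lambda>q. b * y q) = a * b * ip d x y"
  unfolding ip_def by (simp add: sum_distrib_left mult_ac)

lemma ip_diff_self: "ip d (\<lambda>q. x q - y q) (\<lambda>q. x q - y q) = ip d x x - 2 * ip d x y + ip d y y"
  unfolding ip_def by (simp add: sum.distrib sum_subtractf sum_distrib_left algebra_simps)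

definition vec_sum :: "'a set \<Rightarrow> ('a \<Rightarrow> nat \<Rightarrow> real) \<Rightarrow> nat \<Rightarrow> real" where
  "vec_sum I w = (\<lambda>q. \<Sum>i\<in>I. w i q)"

lemma ip_vec_sum_left: "ip d (vec_sum I w) y = (\<Sum>i\<in>I. ip d (w i) y)"
  unfolding ip_def vec_sum_def by (simp add: sum_distrib_right sum.swap[of _ I])

lemma ip_vec_sum_right: "ip d y (vec_sum I w) = (\<Sum>i\<in>I. ip d y (w i))"
  using ip_vec_sum_left[of d I w y] by (simp add: ip_commute)

lemma ip_vec_sum_self: "ip d (vec_sum I w) (vec_sum I w) = (\<Sum>i\<in>I. \<Sum>j\<in>I. ip d (w i) (w j))"
  by (simp only: ip_vec_sum_left ip_vec_sum_right) (rule sum.swap)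

lemma vec_sum_remove:
  assumes "finite I" "i \<in> I"
  shows "vec_sum (I - {i}) w = (\<lambda>q. vec_sum I w q - w i q)"
proof (rule ext)
  fix q show "vec_sum (I - {i}) w q = vec_sum I w q - w i q"
    using sum.remove[OF assms, of "\<lambda>j. w j q"] unfolding vec_sum_def by simp
qed

lemma sum_square_eq_double_sum: "(\<Sum>i\<in>I. a i)\<^sup>2 = (\<Sum>i\<in>I. \<Sum>j\<in>I. a i * a j)"
  for a :: "'a \<Rightarrow> real"
  by (simp add: power2_eq_square sum_product)

text \<open>Schur product theorem: the entrywise product of two Gram matrices is the Gram matrix of
  the tensor products.\<close>

lemma sum_ip_mult_ip_nonneg: "0 \<le> (\<Sum>i\<in>I. \<Sum>j\<in>I. ip n (u i) (u j) * ip d (w i) (w j))"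
proof -
  have "(\<Sum>i\<in>I. \<Sum>j\<in>I. ip n (u i) (u j) * ip d (w i) (w j))
      = (\<Sum>i\<in>I. \<Sum>j\<in>I. \<Sum>p<n. \<Sum>q<d. (u i p * w i q) * (u j p * w j q))"
    unfolding ip_def by (simp add: sum_product mult_ac)
  also have "\<dots> = (\<Sum>i\<in>I. \<Sum>p<n. \<Sum>q<d. \<Sum>j\<in>I. (u i p * w i q) * (u j p * w j q))"
    by (intro sum.cong refl) (subst sum.swap, intro sum.cong refl sum.swap)
  also have "\<dots> = (\<Sum>p<n. \<Sum>q<d. \<Sum>i\<in>I. \<Sum>j\<in>I. (u i p * w i q) * (u j p * w j q))"
    by (subst sum.swap, intro sum.cong refl sum.swap)
  also have "\<dots> = (\<Sum>p<n. \<Sum>q<d. (\<Sum>i\<in>I. u i p * w i q)\<^sup>2)"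
    by (simp only: sum_square_eq_double_sum)
  also have "\<dots> \<ge> 0" by (intro sum_nonneg) simp
  finally show ?thesis .
qed

section \<open>Positive semidefinite matrices\<close>

definition quad_form :: "'a set \<Rightarrow> ('a \<Rightarrow> 'a \<Rightarrow> real) \<Rightarrow> ('a \<Rightarrow> real) \<Rightarrow> real" where
  "quad_form I M x = (\<Sum>i\<in>I. \<Sum>j\<in>I. x i * M i j * x j)"

definition psd_on :: "'a set \<Rightarrow> ('a \<Rightarrow> 'a \<Rightarrow> real) \<Rightarrow> bool" where
  "psd_on I M \<longleftrightarrow> (\<forall>i\<in>I. \<forall>j\<in>I. M i j = M j i) \<and> (\<forall>x. 0 \<le> quad_form I M x)"

lemma psd_onI:
  "(\<And>i j. i \<in> I \<Longrightarrow> j \<in> I \<Longrightarrow> M i j = M j i) \<Longrightarrow> (\<And>x. 0 \<le> quad_form I M x) \<Longrightarrow> psd_on I M"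
  unfolding psd_on_def by blast

lemma psd_on_symmetric: "psd_on I M \<Longrightarrow> i \<in> I \<Longrightarrow> j \<in> I \<Longrightarrow> M i j = M j i"
  unfolding psd_on_def by blast

lemma psd_on_quad_form_nonneg: "psd_on I M \<Longrightarrow> 0 \<le> quad_form I M x"
  unfolding psd_on_def by blast

lemma quad_form_cong: "(\<And>i. i \<in> I \<Longrightarrow> x i = y i) \<Longrightarrow> quad_form I M x = quad_form I M y"
  unfolding quad_form_def by (auto intro!: sum.cong)

lemma quad_form_scale: "quad_form I M (\<lambda>i. c * x i) = c\<^sup>2 * quad_form I M x"
  unfolding quad_form_def by (simp add: sum_distrib_left power2_eq_square mult_ac)

lemma quad_form_restrict:
  assumes "finite I" "S \<subseteq> I" "\<And>i. i \<in> I - S \<Longrightarrow> x i = 0"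
  shows "quad_form I M x = quad_form S M x"
proof -
  have "quad_form I M x = (\<Sum>i\<in>I. \<Sum>j\<in>S. x i * M i j * x j)"
    unfolding quad_form_def using assms by (intro sum.cong refl sum.mono_neutral_right) auto
  also have "\<dots> = quad_form S M x"
    unfolding quad_form_def using assms by (intro sum.mono_neutral_right) auto
  finally show ?thesis .
qed

lemma quad_form_insert:
  assumes "finite F" "a \<notin> F" "\<And>j. j \<in> F \<Longrightarrow> M j a = M a j"
  shows "quad_form (insert a F) M x
    = (x a)\<^sup>2 * M a a + 2 * x a * (\<Sum>j\<in>F. M a j * x j) + quad_form F M x"
proof -
  have "(\<Sum>i\<in>F. x i * M i a * x a) = x a * (\<Sum>j\<in>F. M a j * x j)"
    using assms(3) by (simp add: sum_distrib_left mult_ac)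
  moreover have "(\<Sum>j\<in>F. x a * M a j * x j) = x a * (\<Sum>j\<in>F. M a j * x j)"
    by (simp add: sum_distrib_left mult_ac)
  ultimately show ?thesis
    using assms(1,2) unfolding quad_form_def by (simp add: sum.distrib power2_eq_square)
qed

lemma psd_on_diag_nonneg:
  assumes "psd_on I M" "finite I" "a \<in> I"
  shows "0 \<le> M a a"
proof -
  have "quad_form I M (\<lambda>l. if l = a then 1 else 0) = quad_form {a} M (\<lambda>l. if l = a then 1 else 0)"
    using assms(2,3) by (intro quad_form_restrict) auto
  also have "\<dots> = M a a" by (simp add: quad_form_def)
  finally show ?thesis using psd_on_quad_form_nonneg[OF assms(1)] by metis
qed

lemma psd_on_row_eq_0_if_diag_eq_0:
  assumes "psd_on I M" "finite I" "a \<in> I" "j \<in> I" "M a a = 0"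
  shows "M a j = 0"
proof (rule ccontr)
  assume ne: "M a j \<noteq> 0"
  then have "j \<noteq> a" using assms(5) by auto
  define c where "c = (M j j + 1) / (2 * M a j)"
  define x where "x = (\<lambda>l. if l = a then - c else if l = j then 1 else 0)"
  have "quad_form I M x = quad_form {a, j} M x"
    using assms(2-4) by (intro quad_form_restrict) (auto simp: x_def)
  also have "\<dots> = - 2 * c * M a j + M j j"
    using \<open>j \<noteq> a\<close> assms(5) psd_on_symmetric[OF assms(1,3,4)]
    by (simp add: quad_form_def x_def)
  also have "\<dots> = -1"
    using ne by (simp add: c_def field_simps)
  finally show False using psd_on_quad_form_nonneg[OF assms(1), of x] by simp
qed

text \<open>This holds also when M a a = 0, where the division yields 0.\<close>

lemma psd_on_Schur_complement:
  assumes "finite F" "a \<notin> F" "psd_on (insert a F) M"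
  shows "psd_on F (\<lambda>i j. M i j - M a i * M a j / M a a)"
proof (rule psd_onI)
  fix i j assume "i \<in> F" "j \<in> F"
  then show "M i j - M a i * M a j / M a a = M j i - M a j * M a i / M a a"
    using psd_on_symmetric[OF assms(3)] by simp
next
  fix x
  define s where "s = (\<Sum>j\<in>F. M a j * x j)"
  have sym: "\<And>j. j \<in> F \<Longrightarrow> M j a = M a j"
    using psd_on_symmetric[OF assms(3)] by simp
  have "quad_form F (\<lambda>i j. M i j - M a i * M a j / M a a) x
      = quad_form F M x - (\<Sum>i\<in>F. \<Sum>j\<in>F. (M a i * x i) * (M a j * x j)) / M a a"
    unfolding quad_form_def by (simp add: sum_subtractf sum_divide_distrib algebra_simps)
  also have "\<dots> = quad_form F M x - s\<^sup>2 / M a a"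
    unfolding s_def sum_square_eq_double_sum ..
  also have "\<dots> = quad_form (insert a F) M (x(a := - s / M a a))"
  proof -
    have "(\<Sum>j\<in>F. M a j * (x(a := - s / M a a)) j) = s"
      unfolding s_def using assms(2) by (intro sum.cong) auto
    moreover have "quad_form F M (x(a := - s / M a a)) = quad_form F M x"
      using assms(2) by (intro quad_form_cong) auto
    ultimately show ?thesis
      using quad_form_insert[of F a M, OF assms(1,2) sym, of "x(a := - s / M a a)"]
      by (cases "M a a = 0") (simp_all add: power2_eq_square field_simps)
  qed
  also have "\<dots> \<ge> 0" by (rule psd_on_quad_form_nonneg[OF assms(3)])
  finally show "0 \<le> quad_form F (\<lambda>i j. M i j - M a i * M a j / M a a) x" .
qed

text \<open>Cholesky decomposition: the row of a gives the new last coordinate, the Schur complement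
  the others.\<close>

lemma psd_on_Gram_factorization:
  assumes "finite I" "psd_on I M"
  shows "\<exists>u. \<forall>i\<in>I. \<forall>j\<in>I. ip (card I) (u i) (u j) = M i j"
  using assms
proof (induction I arbitrary: M rule: finite_induct)
  case empty
  then show ?case by simp
next
  case (insert a F)
  define m where "m = card F"
  obtain u' where u': "\<And>i j. i \<in> F \<Longrightarrow> j \<in> F \<Longrightarrow>
      ip m (u' i) (u' j) = M i j - M a i * M a j / M a a"
    using insert.IH[OF psd_on_Schur_complement[OF insert.hyps insert.prems]]
    unfolding m_def by blast
  define r where "r = sqrt (M a a)"
  define u where "u = (\<lambda>i. if i = a then (\<lambda>_. 0)(m := r) else (u' i)(m := M a i / r))"
  have rr: "r * r = M a a"
    unfolding r_def using psd_on_diag_nonneg[OF insert.prems] insert.hyps(1) by simp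
  have sym: "M i j = M j i" if "i \<in> insert a F" "j \<in> insert a F" for i j
    using psd_on_symmetric[OF insert.prems that] .
  have row_a: "ip (Suc m) (u a) (u j) = M a j" if "j \<in> insert a F" for j
  proof (cases "j = a")
    case True
    then show ?thesis by (simp add: u_def ip_Suc ip_fun_upd_left ip_zero_left rr)
  next
    case False
    have "r = 0 \<Longrightarrow> M a j = 0"
      using psd_on_row_eq_0_if_diag_eq_0[OF insert.prems] insert.hyps(1) that rr by auto
    then show ?thesis
      using False insert.hyps(2)
      by (auto simp: u_def ip_Suc ip_fun_upd_left ip_fun_upd_right ip_zero_left)
  qed
  have rows_F: "ip (Suc m) (u i) (u j) = M i j" if "i \<in> F" "j \<in> F" for i j
  proof -
    have "ip (Suc m) (u i) (u j) = M i j - M a i * M a j / M a a + M a i / r * (M a j / r)"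
      using that insert.hyps(2) u'[OF that]
      by (auto simp: u_def ip_Suc ip_fun_upd_left ip_fun_upd_right)
    also have "\<dots> = M i j"
      using rr by (cases "r = 0") (auto simp: field_simps)
    finally show ?thesis .
  qed
  have "ip (Suc m) (u i) (u j) = M i j" if "i \<in> insert a F" "j \<in> insert a F" for i j
    using that row_a rows_F ip_commute[of "Suc m" "u i" "u a"] sym[of a i]
    by (cases "i = a"; cases "j = a") auto
  moreover have "card (insert a F) = Suc m"
    using insert.hyps unfolding m_def by simp
  ultimately show ?case by metis
qed

section \<open>Dual solutions and rigid vector colorings\<close>

definition arcs :: "nat \<Rightarrow> nat set set \<Rightarrow> (nat \<times> nat) set" where
  "arcs n E = {p \<in> {1..n} \<times> {1..n}. {fst p, snd p} \<in> E}"

lemma arcs_subset: "arcs n E \<subseteq> {1..n} \<times> {1..n}"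
  unfolding arcs_def by auto

lemma finite_arcs: "finite (arcs n E)"
  using arcs_subset finite_subset by blast

lemma arcs_swap: "(i, j) \<in> arcs n E \<longleftrightarrow> (j, i) \<in> arcs n E"
  unfolding arcs_def by (auto simp: insert_commute)

lemma arcs_irrefl: "graph_on n E \<Longrightarrow> (i, i) \<notin> arcs n E"
  unfolding arcs_def graph_on_def by (auto simp: doubleton_eq_iff)

lemma in_complementD:
  assumes "{i, j} \<in> complement n E"
  shows "i \<noteq> j" "{i, j} \<notin> E"
  using assms unfolding complement_def by (auto simp: doubleton_eq_iff insert_commute)

lemma edge_if_notin_complement:
  assumes "i \<in> {1..n}" "j \<in> {1..n}" "i \<noteq> j" "{i, j} \<notin> complement n E"
  shows "{i, j} \<in> E"
  using assms unfolding complement_def by blast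

text \<open>If u is a rigid vector t-coloring of the complement, then (t - 1) <u i, u j> is of the
  form dual_matrix t L with L vanishing off the edges of the graph and nonnegative on them.\<close>

definition dual_matrix :: "real \<Rightarrow> (nat \<Rightarrow> nat \<Rightarrow> real) \<Rightarrow> nat \<Rightarrow> nat \<Rightarrow> real" where
  "dual_matrix t L = (\<lambda>i j. (if i = j then t else 0) + L i j - 1)"

definition dual_feasible :: "nat \<Rightarrow> nat set set \<Rightarrow> real \<Rightarrow> bool" where
  "dual_feasible n E t \<longleftrightarrow> (\<exists>L.
     (\<forall>i j. 0 \<le> L i j \<and> L i j = L j i \<and> (L i j \<noteq> 0 \<longrightarrow> (i, j) \<in> arcs n E)) \<and>
     psd_on {1..n} (dual_matrix t L))"

lemma quad_form_dual_matrix: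
  assumes "finite I"
  shows "quad_form I (dual_matrix t L) x
    = t * (\<Sum>i\<in>I. (x i)\<^sup>2) + quad_form I L x - (\<Sum>i\<in>I. x i)\<^sup>2"
proof -
  have "quad_form I (dual_matrix t L) x
      = (\<Sum>i\<in>I. \<Sum>j\<in>I. ((if i = j then t * (x i)\<^sup>2 else 0) + x i * L i j * x j) - x i * x j)"
    unfolding quad_form_def dual_matrix_def
    by (intro sum.cong refl) (auto simp: algebra_simps power2_eq_square)
  also have "\<dots> = t * (\<Sum>i\<in>I. (x i)\<^sup>2) + quad_form I L x - (\<Sum>i\<in>I. x i)\<^sup>2"
    using assms
    by (simp add: quad_form_def sum_subtractf sum.distrib sum_distrib_left sum_square_eq_double_sum)
  finally show ?thesis .
qed

lemma dual_feasible_mono: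
  assumes "dual_feasible n E t" "t \<le> t'"
  shows "dual_feasible n E t'"
proof -
  obtain L where L: "\<forall>i j. 0 \<le> L i j \<and> L i j = L j i \<and> (L i j \<noteq> 0 \<longrightarrow> (i, j) \<in> arcs n E)"
    and psd: "psd_on {1..n} (dual_matrix t L)"
    using assms(1) unfolding dual_feasible_def by blast
  have "psd_on {1..n} (dual_matrix t' L)"
  proof (rule psd_onI)
    show "dual_matrix t' L i j = dual_matrix t' L j i" for i j
      using L by (auto simp: dual_matrix_def)
  next
    fix x
    have "0 \<le> (t' - t) * (\<Sum>i\<in>{1..n}. (x i)\<^sup>2)"
      using assms(2) by (intro mult_nonneg_nonneg sum_nonneg) auto
    then show "0 \<le> quad_form {1..n} (dual_matrix t' L) x"
      using psd_on_quad_form_nonneg[OF psd, of x]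
      by (simp add: quad_form_dual_matrix algebra_simps)
  qed
  then show ?thesis using L unfolding dual_feasible_def by blast
qed

lemma dual_feasible_ge_1:
  assumes "graph_on n E" "1 \<le> n" "dual_feasible n E t"
  shows "1 \<le> t"
proof -
  obtain L where L: "\<forall>i j. 0 \<le> L i j \<and> L i j = L j i \<and> (L i j \<noteq> 0 \<longrightarrow> (i, j) \<in> arcs n E)"
    and psd: "psd_on {1..n} (dual_matrix t L)"
    using assms(3) unfolding dual_feasible_def by blast
  have "0 \<le> dual_matrix t L 1 1"
    using psd_on_diag_nonneg[OF psd] assms(2) by simp
  moreover have "L 1 1 = 0"
    using L arcs_irrefl[OF assms(1)] by blast
  ultimately show ?thesis by (simp add: dual_matrix_def)
qed

lemma dual_feasible_card: "dual_feasible n E (real n)"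
proof -
  have "psd_on {1..n} (dual_matrix (real n) (\<lambda>_ _. 0))"
  proof (rule psd_onI)
    fix x :: "nat \<Rightarrow> real"
    have "(\<Sum>i\<in>{1..n}. 1 * x i)\<^sup>2 \<le> (\<Sum>i\<in>{1..n}. 1\<^sup>2) * (\<Sum>i\<in>{1..n}. (x i)\<^sup>2)"
      by (rule Cauchy_Schwarz_ineq_sum)
    moreover have "quad_form {1..n} (\<lambda>_ _. 0) x = 0"
      by (simp add: quad_form_def)
    ultimately show "0 \<le> quad_form {1..n} (dual_matrix (real n) (\<lambda>_ _. 0)) x"
      by (simp add: quad_form_dual_matrix)
  qed (simp add: dual_matrix_def)
  then show ?thesis unfolding dual_feasible_def by auto
qed

lemma rigid_vector_coloring_if_dual_feasible:
  assumes "graph_on n E" "1 < t" "dual_feasible n E t"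
  shows "\<exists>u. rigid_vector_coloring n (complement n E) t u"
proof -
  obtain L where L: "\<forall>i j. 0 \<le> L i j \<and> L i j = L j i \<and> (L i j \<noteq> 0 \<longrightarrow> (i, j) \<in> arcs n E)"
    and psd: "psd_on {1..n} (dual_matrix t L)"
    using assms(3) unfolding dual_feasible_def by blast
  define Y where "Y = (\<lambda>i j. dual_matrix t L i j / (t - 1))"
  have "psd_on {1..n} Y"
  proof (rule psd_onI)
    show "Y i j = Y j i" for i j
      using L by (auto simp: Y_def dual_matrix_def)
  next
    fix x
    have "quad_form {1..n} Y x = quad_form {1..n} (dual_matrix t L) x / (t - 1)"
      unfolding quad_form_def Y_def by (simp add: sum_divide_distrib)
    then show "0 \<le> quad_form {1..n} Y x"
      using psd_on_quad_form_nonneg[OF psd, of x] assms(2) by simp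
  qed
  then obtain u where u: "\<forall>i\<in>{1..n}. \<forall>j\<in>{1..n}. ip n (u i) (u j) = Y i j"
    using psd_on_Gram_factorization[of "{1..n}" Y] by auto
  have L_diag: "L i i = 0" for i
    using L arcs_irrefl[OF assms(1)] by blast
  have "rigid_vector_coloring n (complement n E) t u"
    unfolding rigid_vector_coloring_def
  proof (intro conjI ballI impI)
    fix i assume "i \<in> {1..n}"
    then show "ip n (u i) (u i) = 1"
      using u assms(2) L_diag by (simp add: Y_def dual_matrix_def)
  next
    fix i j assume ij: "i \<in> {1..n}" "j \<in> {1..n}" and "{i, j} \<in> complement n E"
    then have "i \<noteq> j" "(i, j) \<notin> arcs n E"
      using in_complementD unfolding arcs_def by auto
    then have "L i j = 0" using L by blast
    then show "ip n (u i) (u j) = - 1 / (t - 1)"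
      using u ij \<open>i \<noteq> j\<close> by (simp add: Y_def dual_matrix_def)
  next
    fix i j assume ij: "i \<in> {1..n}" "j \<in> {1..n}" and "i \<noteq> j \<and> {i, j} \<notin> complement n E"
    moreover have "- 1 / (t - 1) \<le> (L i j - 1) / (t - 1)"
      using L assms(2) by (intro divide_right_mono) auto
    ultimately show "- 1 / (t - 1) \<le> ip n (u i) (u j)"
      using u by (simp add: Y_def dual_matrix_def)
  qed
  then show ?thesis by blast
qed

lemma theta2_le_coloring:
  assumes "1 < k" "rigid_vector_coloring n (complement n E) k u"
  shows "theta2 n E \<le> k"
  unfolding theta2_def theta2_bar_def using assms
  by (intro cInf_lower) (auto intro: bdd_belowI[where m = 1])

lemma rigid_vector_colorings_nonempty:
  assumes "graph_on n E"
  shows "{k. 1 < k \<and> (\<exists>u. rigid_vector_coloring n (complement n E) k u)} \<noteq> {}"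
proof -
  have "dual_feasible n E (real n + 2)"
    by (rule dual_feasible_mono[OF dual_feasible_card]) simp
  then have "\<exists>u. rigid_vector_coloring n (complement n E) (real n + 2) u"
    by (intro rigid_vector_coloring_if_dual_feasible[OF assms]) auto
  then show ?thesis by force
qed

lemma theta2_ge_1:
  assumes "graph_on n E"
  shows "1 \<le> theta2 n E"
  unfolding theta2_def theta2_bar_def
  using rigid_vector_colorings_nonempty[OF assms] by (intro cInf_greatest) auto

section \<open>Weak duality\<close>

lemma le_cInf_mult:
  fixes K :: "real set"
  assumes "K \<noteq> {}" "\<And>k. k \<in> K \<Longrightarrow> x \<le> k * c" "0 \<le> c"
  shows "x \<le> Inf K * c"
proof (cases "c = 0")
  case True
  then show ?thesis using assms(1,2) by auto
next
  case False
  then have "x / c \<le> Inf K"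
    using assms by (intro cInf_greatest) (auto simp: pos_divide_le_eq)
  then show ?thesis using False assms(3) by (simp add: pos_divide_le_eq)
qed

text \<open>The Gram matrix of w is paired with the positive semidefinite matrix
  1 + (k - 1) <u i, u j>, which is k on the diagonal, 0 on the edges of the complement and
  nonnegative on the edges of the graph.\<close>

lemma rigid_vector_coloring_norm_sum_le:
  assumes u: "rigid_vector_coloring n (complement n E) k u" and k: "1 < k"
    and I: "I \<subseteq> {1..n}"
    and w: "\<forall>i\<in>I. \<forall>j\<in>I. {i, j} \<in> E \<longrightarrow> ip d (w i) (w j) \<le> 0"
  shows "ip d (vec_sum I w) (vec_sum I w) \<le> k * (\<Sum>i\<in>I. ip d (w i) (w i))"
proof -
  have fin: "finite I" using I finite_subset by blast
  have entry: "(1 + (k - 1) * ip n (u i) (u j)) * ip d (w i) (w j)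
      \<le> (if i = j then k * ip d (w i) (w i) else 0)" if ij: "i \<in> I" "j \<in> I" for i j
  proof -
    have V: "i \<in> {1..n}" "j \<in> {1..n}" using ij I by auto
    consider "i = j" | "i \<noteq> j" "{i, j} \<in> complement n E" | "i \<noteq> j" "{i, j} \<notin> complement n E"
      by blast
    then show ?thesis
    proof cases
      case 1
      then show ?thesis using u V unfolding rigid_vector_coloring_def by auto
    next
      case 2
      then show ?thesis using u V k unfolding rigid_vector_coloring_def by auto
    next
      case 3
      then have "- 1 / (k - 1) \<le> ip n (u i) (u j)"
        using u V unfolding rigid_vector_coloring_def by blast
      then have "- 1 / (k - 1) * (k - 1) \<le> ip n (u i) (u j) * (k - 1)"
        using k by (intro mult_right_mono) auto
      then have "0 \<le> 1 + (k - 1) * ip n (u i) (u j)"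
        using k by (simp add: algebra_simps)
      moreover have "ip d (w i) (w j) \<le> 0"
        using w ij edge_if_notin_complement[OF V 3] by blast
      ultimately show ?thesis using 3 by (simp add: mult_nonneg_nonpos)
    qed
  qed
  have "ip d (vec_sum I w) (vec_sum I w)
      \<le> ip d (vec_sum I w) (vec_sum I w)
         + (k - 1) * (\<Sum>i\<in>I. \<Sum>j\<in>I. ip n (u i) (u j) * ip d (w i) (w j))"
    using k by (simp add: sum_ip_mult_ip_nonneg)
  also have "\<dots> = (\<Sum>i\<in>I. \<Sum>j\<in>I. (1 + (k - 1) * ip n (u i) (u j)) * ip d (w i) (w j))"
    unfolding ip_vec_sum_self sum_distrib_left sum.distrib[symmetric]
    by (intro sum.cong refl) (simp add: algebra_simps)
  also have "\<dots> \<le> (\<Sum>i\<in>I. \<Sum>j\<in>I. if i = j then k * ip d (w i) (w i) else 0)"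
    using entry by (intro sum_mono) auto
  also have "\<dots> = k * (\<Sum>i\<in>I. ip d (w i) (w i))"
    using fin by (simp add: sum_distrib_left)
  finally show ?thesis .
qed

lemma norm_sum_le_theta2:
  assumes "graph_on n E" "I \<subseteq> {1..n}"
    and "\<forall>i\<in>I. \<forall>j\<in>I. {i, j} \<in> E \<longrightarrow> ip d (w i) (w j) \<le> 0"
  shows "ip d (vec_sum I w) (vec_sum I w) \<le> theta2 n E * (\<Sum>i\<in>I. ip d (w i) (w i))"
  unfolding theta2_def theta2_bar_def using rigid_vector_coloring_norm_sum_le[OF _ _ assms(2,3)]
  by (intro le_cInf_mult[OF rigid_vector_colorings_nonempty[OF assms(1)]])
     (auto intro: sum_nonneg ip_self_nonneg)

lemma theta2'_value_le_theta2:
  assumes G: "graph_on n E" and s: "s \<in> theta2'_values n E"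
  shows "s \<le> theta2 n E"
proof -
  obtain d v where s_eq: "s = (\<Sum>i=1..n. cfun d (v i) (v 0))"
    and v0: "\<forall>i\<in>{1..n}. 0 \<le> ip d (v 0) (v i)"
    and vE: "\<forall>i\<in>{1..n}. \<forall>j\<in>{1..n}. {i, j} \<in> E \<longrightarrow> ip d (v i) (v j) \<le> 0"
    using s unfolding theta2'_values_def by blast
  define N where "N = ip d (v 0) (v 0)"
  define \<beta> where "\<beta> i = ip d (v 0) (v i) / ip d (v i) (v i)" for i
  define w where "w i = (\<lambda>q. \<beta> i * v i q)" for i
  define A where "A = ip d (v 0) (vec_sum {1..n} w)"
  have \<beta>_nonneg: "0 \<le> \<beta> i" if "i \<in> {1..n}" for i
    using v0 that ip_self_nonneg[of d "v i"] unfolding \<beta>_def by simp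
  have wE: "\<forall>i\<in>{1..n}. \<forall>j\<in>{1..n}. {i, j} \<in> E \<longrightarrow> ip d (w i) (w j) \<le> 0"
    using vE \<beta>_nonneg unfolding w_def ip_scale by (auto intro: mult_nonneg_nonpos)
  have v0_w: "ip d (v 0) (w i) = (ip d (v 0) (v i))\<^sup>2 / ip d (v i) (v i)" for i
    unfolding w_def \<beta>_def ip_scale_right by (simp add: power2_eq_square)
  have w_self: "ip d (w i) (w i) = ip d (v 0) (w i)" for i
    unfolding v0_w unfolding w_def \<beta>_def ip_scale by (simp add: power2_eq_square)
  have "cfun d (v i) (v 0) = ip d (v 0) (w i) / N" for i
    unfolding cfun_def v0_w N_def by (auto simp: ip_commute[of d "v i" "v 0"])
  then have s_A: "s = A / N"
    unfolding s_eq A_def ip_vec_sum_right sum_divide_distrib by simp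
  have "A\<^sup>2 \<le> N * (theta2 n E * A)"
  proof -
    have "A\<^sup>2 \<le> N * ip d (vec_sum {1..n} w) (vec_sum {1..n} w)"
      unfolding A_def N_def by (rule ip_Cauchy_Schwarz)
    also have "\<dots> \<le> N * (theta2 n E * (\<Sum>i\<in>{1..n}. ip d (w i) (w i)))"
      unfolding N_def using norm_sum_le_theta2[OF G _ wE]
      by (intro mult_left_mono ip_self_nonneg) auto
    finally show ?thesis unfolding A_def ip_vec_sum_right w_self .
  qed
  moreover have "0 \<le> A"
    unfolding A_def ip_vec_sum_right v0_w by (intro sum_nonneg divide_nonneg_nonneg ip_self_nonneg) simp
  moreover have "0 \<le> N" "1 \<le> theta2 n E"
    unfolding N_def using ip_self_nonneg theta2_ge_1[OF G] by auto
  ultimately have "A \<le> theta2 n E * N"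
    by (cases "A = 0") (auto simp: power2_eq_square mult_ac)
  then show ?thesis
    unfolding s_A using \<open>0 \<le> N\<close> \<open>1 \<le> theta2 n E\<close>
    by (cases "N = 0") (auto simp: pos_divide_le_eq)
qed

section \<open>The spectraplex\<close>

text \<open>Matrices indexed by {1..n} are functions on pairs of naturals that vanish elsewhere, so
  that the spectraplex is compact in the product topology.\<close>

definition spectraplex :: "nat \<Rightarrow> (nat \<times> nat \<Rightarrow> real) set" where
  "spectraplex n = {B. (\<forall>p. p \<notin> {1..n} \<times> {1..n} \<longrightarrow> B p = 0) \<and> psd_on {1..n} (curry B)
     \<and> (\<Sum>i\<in>{1..n}. B (i, i)) = 1}"

lemmas continuous_on_coordinate [continuous_intros] =
  continuous_on_product_then_coordinatewise[OF continuous_on_id]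

lemma closed_spectraplex: "closed (spectraplex n)"
  unfolding spectraplex_def psd_on_def quad_form_def curry_def Ball_def
  by (intro closed_Collect_conj closed_Collect_all closed_Collect_imp open_Collect_const
      closed_Collect_eq closed_Collect_le continuous_intros)

lemma spectraplex_entry_bound:
  assumes "B \<in> spectraplex n"
  shows "\<bar>B p\<bar> \<le> 1"
proof (cases "p \<in> {1..n} \<times> {1..n}")
  case True
  then obtain i j where p: "p = (i, j)" and ij: "i \<in> {1..n}" "j \<in> {1..n}" by auto
  have psd: "psd_on {1..n} (curry B)" and trace: "(\<Sum>l\<in>{1..n}. B (l, l)) = 1"
    using assms unfolding spectraplex_def by auto
  have diag_nonneg: "\<And>l. l \<in> {1..n} \<Longrightarrow> 0 \<le> B (l, l)"
    using psd_on_diag_nonneg[OF psd] by simp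
  then have diag: "0 \<le> B (l, l) \<and> B (l, l) \<le> 1" if "l \<in> {1..n}" for l
    using member_le_sum[of l "{1..n}" "\<lambda>l. B (l, l)"] that trace by simp
  obtain b where b: "\<forall>i\<in>{1..n}. \<forall>j\<in>{1..n}. ip n (b i) (b j) = B (i, j)"
    using psd_on_Gram_factorization[OF _ psd] by auto
  have "(B (i, j))\<^sup>2 \<le> B (i, i) * B (j, j)"
    using ip_Cauchy_Schwarz[of n "b i" "b j"] b ij by simp
  also have "\<dots> \<le> 1"
    using diag[OF ij(1)] diag[OF ij(2)] by (simp add: mult_le_one)
  finally show ?thesis unfolding p abs_square_le_1 .
next
  case False
  then have "B p = 0" using assms unfolding spectraplex_def by blast
  then show ?thesis by simp
qed

lemma compact_spectraplex: "compact (spectraplex n)"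
proof -
  define box where "box = PiE UNIV (\<lambda>p. if p \<in> {1..n} \<times> {1..n} then {-1..1} else {0::real})"
  have "compactin (product_topology (\<lambda>_. euclidean) UNIV) box"
    unfolding box_def by (subst compactin_PiE) auto
  then have "compact box" by (simp add: euclidean_product_topology)
  moreover have "B \<in> box" if B: "B \<in> spectraplex n" for B
  proof -
    have "B p = 0" if "p \<notin> {1..n} \<times> {1..n}" for p
      using B that unfolding spectraplex_def by blast
    then show ?thesis
      using spectraplex_entry_bound[OF B] by (auto simp: box_def PiE_UNIV_domain abs_le_iff)
  qed
  ultimately show ?thesis
    using closed_spectraplex by (metis compact_Int_closed inf.absorb_iff2 subsetI)
qed

lemma convex_combination_in_spectraplex:
  assumes "B \<in> spectraplex n" "C \<in> spectraplex n" "0 \<le> e" "e \<le> 1"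
  shows "(\<lambda>p. (1 - e) * B p + e * C p) \<in> spectraplex n"
proof -
  have psd: "psd_on {1..n} (curry B)" "psd_on {1..n} (curry C)"
    using assms(1,2) unfolding spectraplex_def by auto
  have "psd_on {1..n} (curry (\<lambda>p. (1 - e) * B p + e * C p))"
  proof (rule psd_onI)
    fix i j assume "i \<in> {1..n}" "j \<in> {1..n}"
    then show "curry (\<lambda>p. (1 - e) * B p + e * C p) i j = curry (\<lambda>p. (1 - e) * B p + e * C p) j i"
      using psd_on_symmetric[OF psd(1)] psd_on_symmetric[OF psd(2)] by simp
  next
    fix x
    have "quad_form {1..n} (curry (\<lambda>p. (1 - e) * B p + e * C p)) x
        = (1 - e) * quad_form {1..n} (curry B) x + e * quad_form {1..n} (curry C) x"
      unfolding quad_form_def sum_distrib_left sum.distrib[symmetric]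
      by (intro sum.cong refl) (simp add: algebra_simps)
    then show "0 \<le> quad_form {1..n} (curry (\<lambda>p. (1 - e) * B p + e * C p)) x"
      using assms(3,4) psd_on_quad_form_nonneg[OF psd(1)] psd_on_quad_form_nonneg[OF psd(2)]
      by simp
  qed
  then show ?thesis
    using assms unfolding spectraplex_def
    by (simp add: sum.distrib sum_distrib_left[symmetric])
qed

definition outer :: "nat \<Rightarrow> (nat \<Rightarrow> real) \<Rightarrow> nat \<times> nat \<Rightarrow> real" where
  "outer n y = (\<lambda>p. if p \<in> {1..n} \<times> {1..n} then y (fst p) * y (snd p) else 0)"

lemma outer_in_spectraplex:
  assumes "(\<Sum>i\<in>{1..n}. (y i)\<^sup>2) = 1"
  shows "outer n y \<in> spectraplex n"
proof -
  have "quad_form {1..n} (curry (outer n y)) x = (\<Sum>i\<in>{1..n}. x i * y i)\<^sup>2" for x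
    unfolding sum_square_eq_double_sum quad_form_def outer_def
    by (intro sum.cong refl) (auto simp: mult_ac)
  then have "psd_on {1..n} (curry (outer n y))"
    by (intro psd_onI) (auto simp: outer_def)
  then show ?thesis
    using assms unfolding spectraplex_def by (auto simp: outer_def power2_eq_square)
qed

lemma sum_outer: "(\<Sum>p\<in>{1..n} \<times> {1..n}. outer n y p) = (\<Sum>i\<in>{1..n}. y i)\<^sup>2"
  unfolding sum_square_eq_double_sum sum.cartesian_product
  by (intro sum.cong refl) (auto simp: outer_def split: prod.split)

section \<open>Strong duality\<close>

lemma nonneg_if_nonneg_perturbation:
  fixes x R :: real
  assumes "\<And>e. 0 < e \<Longrightarrow> e \<le> 1 \<Longrightarrow> 0 \<le> x + e * R"
  shows "0 \<le> x"
proof (rule tendsto_lowerbound)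
  show "((\<lambda>e. x + e * R) \<longlongrightarrow> x) (at_right 0)"
    by (auto intro!: tendsto_eq_intros)
  show "\<forall>\<^sub>F e in at_right 0. 0 \<le> x + e * R"
    unfolding eventually_at_right_field using assms by (intro exI[of _ 1]) auto
qed simp

lemma max0_sq_add_le: "(max 0 (x + h))\<^sup>2 \<le> (max 0 x)\<^sup>2 + 2 * max 0 x * h + h\<^sup>2" for x h :: real
proof (cases "0 \<le> x")
  case True
  then have "(max 0 x)\<^sup>2 + 2 * max 0 x * h + h\<^sup>2 = (x + h)\<^sup>2"
    by (simp add: power2_eq_square algebra_simps)
  then show ?thesis by (simp add: max_def)
next
  case False
  then show ?thesis
    by (cases "0 \<le> x + h") (auto simp: max_def power2_eq_square intro: mult_mono)
qed

definition penalty :: "nat \<Rightarrow> nat set set \<Rightarrow> real \<Rightarrow> (nat \<times> nat \<Rightarrow> real) \<Rightarrow> real" where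
  "penalty n E k B = (max 0 (k - (\<Sum>p\<in>{1..n} \<times> {1..n}. B p)))\<^sup>2 + (\<Sum>p\<in>arcs n E. (max 0 (B p))\<^sup>2)"

lemma continuous_on_penalty: "continuous_on S (penalty n E k)"
  unfolding penalty_def by (intro continuous_intros)

lemma penalty_perturbation_le:
  fixes B C :: "nat \<times> nat \<Rightarrow> real" and n :: nat and k :: real
  defines "a \<equiv> max 0 (k - (\<Sum>p\<in>{1..n} \<times> {1..n}. B p))"
    and "D \<equiv> (\<Sum>p\<in>{1..n} \<times> {1..n}. C p - B p)"
  shows "penalty n E k (\<lambda>p. B p + e * (C p - B p))
    \<le> penalty n E k B + 2 * e * (- a * D + (\<Sum>p\<in>arcs n E. max 0 (B p) * (C p - B p)))
       + e\<^sup>2 * (D\<^sup>2 + (\<Sum>p\<in>arcs n E. (C p - B p)\<^sup>2))"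
proof -
  have "(\<Sum>p\<in>{1..n} \<times> {1..n}. B p + e * (C p - B p)) = (\<Sum>p\<in>{1..n} \<times> {1..n}. B p) + e * D"
    unfolding D_def by (simp add: sum.distrib sum_distrib_left)
  then have sum_term: "(max 0 (k - (\<Sum>p\<in>{1..n} \<times> {1..n}. B p + e * (C p - B p))))\<^sup>2
      \<le> a\<^sup>2 + 2 * a * (- e * D) + (- e * D)\<^sup>2"
    unfolding a_def using max0_sq_add_le[of "k - (\<Sum>p\<in>{1..n} \<times> {1..n}. B p)" "- e * D"]
    by (simp add: algebra_simps)
  have "(\<Sum>p\<in>arcs n E. (max 0 (B p + e * (C p - B p)))\<^sup>2)
      \<le> (\<Sum>p\<in>arcs n E. (max 0 (B p))\<^sup>2 + 2 * max 0 (B p) * (e * (C p - B p)) + (e * (C p - B p))\<^sup>2)"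
    by (intro sum_mono max0_sq_add_le)
  also have "\<dots> = (\<Sum>p\<in>arcs n E. (max 0 (B p))\<^sup>2) + 2 * e * (\<Sum>p\<in>arcs n E. max 0 (B p) * (C p - B p))
      + e\<^sup>2 * (\<Sum>p\<in>arcs n E. (C p - B p)\<^sup>2)"
    unfolding sum_distrib_left sum.distrib[symmetric]
    by (intro sum.cong refl) (simp add: power2_eq_square algebra_simps)
  finally have arcs_term: "(\<Sum>p\<in>arcs n E. (max 0 (B p + e * (C p - B p)))\<^sup>2)
      \<le> (\<Sum>p\<in>arcs n E. (max 0 (B p))\<^sup>2) + 2 * e * (\<Sum>p\<in>arcs n E. max 0 (B p) * (C p - B p))
        + e\<^sup>2 * (\<Sum>p\<in>arcs n E. (C p - B p)\<^sup>2)" .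
  show ?thesis
    using sum_term arcs_term unfolding penalty_def a_def[symmetric]
    by (simp add: algebra_simps power2_eq_square)
qed

lemma penalty_first_order:
  assumes B\<^sub>0: "B\<^sub>0 \<in> spectraplex n" "\<And>C. C \<in> spectraplex n \<Longrightarrow> penalty n E k B\<^sub>0 \<le> penalty n E k C"
    and C: "C \<in> spectraplex n"
    and a: "a = max 0 (k - (\<Sum>p\<in>{1..n} \<times> {1..n}. B\<^sub>0 p))"
    and \<mu>: "\<And>p. \<mu> p = max 0 (B\<^sub>0 p)"
  shows "a * (\<Sum>p\<in>{1..n} \<times> {1..n}. C p) - (\<Sum>p\<in>arcs n E. \<mu> p * C p)
    \<le> a * k - penalty n E k B\<^sub>0"
proof -
  define D where "D = (\<Sum>p\<in>{1..n} \<times> {1..n}. C p - B\<^sub>0 p)"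
  define L where "L = - a * D + (\<Sum>p\<in>arcs n E. \<mu> p * (C p - B\<^sub>0 p))"
  define R where "R = D\<^sup>2 + (\<Sum>p\<in>arcs n E. (C p - B\<^sub>0 p)\<^sup>2)"
  have "0 \<le> 2 * L + e * R" if e: "0 < e" "e \<le> 1" for e
  proof -
    have "(\<lambda>p. (1 - e) * B\<^sub>0 p + e * C p) \<in> spectraplex n"
      using convex_combination_in_spectraplex[OF B\<^sub>0(1) C] e by simp
    then have "penalty n E k B\<^sub>0 \<le> penalty n E k (\<lambda>p. B\<^sub>0 p + e * (C p - B\<^sub>0 p))"
      using B\<^sub>0(2) by (simp add: algebra_simps)
    also have "\<dots> \<le> penalty n E k B\<^sub>0 + e * (2 * L + e * R)"
      using penalty_perturbation_le[where B = B\<^sub>0 and C = C and n = n and k = k and E = E and e = e]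
      unfolding L_def R_def D_def a \<mu>
      by (simp add: algebra_simps power2_eq_square)
    finally show ?thesis using e by (simp add: zero_le_mult_iff)
  qed
  then have "0 \<le> L"
    using nonneg_if_nonneg_perturbation[of "2 * L" R] by simp
  moreover have "a * (\<Sum>p\<in>{1..n} \<times> {1..n}. B\<^sub>0 p) = a * k - a\<^sup>2"
    unfolding a by (auto simp: max_def power2_eq_square algebra_simps)
  moreover have "(\<Sum>p\<in>arcs n E. \<mu> p * B\<^sub>0 p) = (\<Sum>p\<in>arcs n E. (\<mu> p)\<^sup>2)"
    unfolding \<mu> by (intro sum.cong refl) (auto simp: max_def power2_eq_square)
  moreover have "penalty n E k B\<^sub>0 = a\<^sup>2 + (\<Sum>p\<in>arcs n E. (\<mu> p)\<^sup>2)"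
    unfolding penalty_def a \<mu> ..
  ultimately show ?thesis
    unfolding L_def D_def by (simp add: sum_subtractf right_diff_distrib algebra_simps)
qed

lemma quad_form_nonneg_if_unit:
  assumes "finite I" "\<And>y. (\<Sum>i\<in>I. (y i)\<^sup>2) = 1 \<Longrightarrow> 0 \<le> quad_form I M y"
  shows "0 \<le> quad_form I M x"
proof -
  define N where "N = (\<Sum>i\<in>I. (x i)\<^sup>2)"
  show ?thesis
  proof (cases "N = 0")
    case True
    then have "\<forall>i\<in>I. x i = 0"
      using assms(1) by (simp add: N_def sum_nonneg_eq_0_iff)
    then have "quad_form I M x = quad_form I M (\<lambda>_. 0)"
      by (intro quad_form_cong) simp
    then show ?thesis by (simp add: quad_form_def)
  next
    case False
    then have N: "0 < N" unfolding N_def by (simp add: less_le sum_nonneg)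
    define y where "y i = x i / sqrt N" for i
    have "(\<Sum>i\<in>I. (y i)\<^sup>2) = 1"
      unfolding y_def using N by (simp add: power_divide sum_divide_distrib[symmetric] N_def)
    moreover have "quad_form I M x = N * quad_form I M y"
      using quad_form_scale[of I M "sqrt N" y] N by (simp add: y_def)
    ultimately show ?thesis using assms(2) N by simp
  qed
qed

lemma dual_feasible_if_unit_bound:
  assumes a: "0 < a" and \<mu>: "\<And>p. 0 \<le> \<mu> p" "\<And>i j. \<mu> (i, j) = \<mu> (j, i)"
    and bound: "\<And>y. (\<Sum>i\<in>{1..n}. (y i)\<^sup>2) = 1 \<Longrightarrow>
      a * (\<Sum>i\<in>{1..n}. y i)\<^sup>2 - (\<Sum>p\<in>arcs n E. \<mu> p * (y (fst p) * y (snd p))) \<le> a * t"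
  shows "dual_feasible n E t"
proof -
  define L where "L i j = (if (i, j) \<in> arcs n E then \<mu> (i, j) / a else 0)" for i j
  have L: "\<forall>i j. 0 \<le> L i j \<and> L i j = L j i \<and> (L i j \<noteq> 0 \<longrightarrow> (i, j) \<in> arcs n E)"
    using a \<mu> arcs_swap unfolding L_def by auto
  have quad_form_L: "quad_form {1..n} L y = (\<Sum>p\<in>arcs n E. \<mu> p * (y (fst p) * y (snd p))) / a" for y
  proof -
    have "quad_form {1..n} L y
        = (\<Sum>p\<in>{1..n} \<times> {1..n}. if p \<in> arcs n E then \<mu> p * (y (fst p) * y (snd p)) / a else 0)"
      unfolding quad_form_def sum.cartesian_product L_def
      by (intro sum.cong refl) (auto simp: mult_ac)
    also have "\<dots> = (\<Sum>p\<in>arcs n E. \<mu> p * (y (fst p) * y (snd p)) / a)"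
      using arcs_subset by (simp add: sum.inter_restrict[symmetric] Int_absorb1)
    finally show ?thesis by (simp add: sum_divide_distrib)
  qed
  have "psd_on {1..n} (dual_matrix t L)"
  proof (rule psd_onI)
    show "dual_matrix t L i j = dual_matrix t L j i" for i j
      using L by (auto simp: dual_matrix_def)
  next
    fix x
    show "0 \<le> quad_form {1..n} (dual_matrix t L) x"
    proof (rule quad_form_nonneg_if_unit)
      fix y :: "nat \<Rightarrow> real" assume y: "(\<Sum>i\<in>{1..n}. (y i)\<^sup>2) = 1"
      have "a * ((\<Sum>i\<in>{1..n}. y i)\<^sup>2 - (\<Sum>p\<in>arcs n E. \<mu> p * (y (fst p) * y (snd p))) / a) \<le> a * t"
        using bound[OF y] a by (simp add: right_diff_distrib)
      then have "(\<Sum>i\<in>{1..n}. y i)\<^sup>2 - (\<Sum>p\<in>arcs n E. \<mu> p * (y (fst p) * y (snd p))) / a \<le> t"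
        using a by (simp only: mult_le_cancel_left_pos)
      then show "0 \<le> quad_form {1..n} (dual_matrix t L) y"
        using y unfolding quad_form_dual_matrix[OF finite_atLeastAtMost] quad_form_L by simp
    qed simp
  qed
  then show ?thesis using L unfolding dual_feasible_def by blast
qed

lemma dual_feasible_if_no_primal_witness:
  assumes n: "1 \<le> n" and G: "graph_on n E"
    and no_witness: "\<not> (\<exists>B\<in>spectraplex n. (\<forall>p\<in>arcs n E. B p \<le> 0) \<and> k \<le> (\<Sum>p\<in>{1..n} \<times> {1..n}. B p))"
  shows "\<exists>t<k. dual_feasible n E t"
proof -
  define e\<^sub>1 where "e\<^sub>1 i = (if i = 1 then 1 else 0 :: real)" for i :: nat
  have e\<^sub>1: "outer n e\<^sub>1 \<in> spectraplex n"
    using n by (intro outer_in_spectraplex) (simp add: e\<^sub>1_def if_distrib[of "\<lambda>x. x\<^sup>2"] cong: if_cong)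
  obtain B\<^sub>0 where B\<^sub>0: "B\<^sub>0 \<in> spectraplex n" "\<And>C. C \<in> spectraplex n \<Longrightarrow> penalty n E k B\<^sub>0 \<le> penalty n E k C"
    using continuous_attains_inf[OF compact_spectraplex _ continuous_on_penalty] e\<^sub>1 by blast
  define a where "a = max 0 (k - (\<Sum>p\<in>{1..n} \<times> {1..n}. B\<^sub>0 p))"
  define \<mu> where "\<mu> p = max 0 (B\<^sub>0 p)" for p
  define \<phi> where "\<phi> = penalty n E k B\<^sub>0"
  have first_order: "a * (\<Sum>p\<in>{1..n} \<times> {1..n}. C p) - (\<Sum>p\<in>arcs n E. \<mu> p * C p) \<le> a * k - \<phi>"
    if "C \<in> spectraplex n" for C
    using penalty_first_order[OF B\<^sub>0(1) B\<^sub>0(2) that a_def \<mu>_def] unfolding \<phi>_def .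
  have "0 < \<phi>"
  proof (rule ccontr)
    assume "\<not> 0 < \<phi>"
    then have "a\<^sup>2 + (\<Sum>p\<in>arcs n E. (\<mu> p)\<^sup>2) \<le> 0"
      unfolding \<phi>_def penalty_def a_def \<mu>_def by simp
    moreover have "0 \<le> (\<Sum>p\<in>arcs n E. (\<mu> p)\<^sup>2)" "0 \<le> a\<^sup>2"
      by (simp_all add: sum_nonneg)
    ultimately have "a\<^sup>2 = 0" "(\<Sum>p\<in>arcs n E. (\<mu> p)\<^sup>2) = 0"
      by linarith+
    then have "a = 0" "\<forall>p\<in>arcs n E. \<mu> p = 0"
      by (simp_all add: sum_nonneg_eq_0_iff[OF finite_arcs])
    then have "k \<le> (\<Sum>p\<in>{1..n} \<times> {1..n}. B\<^sub>0 p)" "\<forall>p\<in>arcs n E. B\<^sub>0 p \<le> 0"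
      unfolding a_def \<mu>_def by (auto simp: max_def split: if_splits)
    then show False using no_witness B\<^sub>0(1) by blast
  qed
  have "(\<Sum>p\<in>arcs n E. \<mu> p * outer n e\<^sub>1 p) = 0"
    using arcs_irrefl[OF G] arcs_subset by (intro sum.neutral) (auto simp: outer_def e\<^sub>1_def)
  moreover have "(\<Sum>p\<in>{1..n} \<times> {1..n}. outer n e\<^sub>1 p) = 1"
    unfolding sum_outer using n by (simp add: e\<^sub>1_def)
  ultimately have "a \<le> a * k - \<phi>"
    using first_order[OF e\<^sub>1] by simp
  moreover have "0 \<le> a" unfolding a_def by simp
  ultimately have a: "0 < a"
    using \<open>0 < \<phi>\<close> by (cases "a = 0") auto
  have "dual_feasible n E (k - \<phi> / a)"
  proof (rule dual_feasible_if_unit_bound[OF a])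
    show "\<And>p. 0 \<le> \<mu> p" unfolding \<mu>_def by simp
    have "B\<^sub>0 (i, j) = B\<^sub>0 (j, i)" for i j
      using B\<^sub>0(1) psd_on_symmetric[of "{1..n}" "curry B\<^sub>0" i j] unfolding spectraplex_def
      by (cases "i \<in> {1..n} \<and> j \<in> {1..n}") auto
    then show "\<And>i j. \<mu> (i, j) = \<mu> (j, i)" unfolding \<mu>_def by simp
  next
    fix y :: "nat \<Rightarrow> real" assume "(\<Sum>i\<in>{1..n}. (y i)\<^sup>2) = 1"
    then have "a * (\<Sum>i\<in>{1..n}. y i)\<^sup>2 - (\<Sum>p\<in>arcs n E. \<mu> p * outer n y p) \<le> a * k - \<phi>"
      using first_order[OF outer_in_spectraplex] unfolding sum_outer by blast
    moreover have "(\<Sum>p\<in>arcs n E. \<mu> p * outer n y p) = (\<Sum>p\<in>arcs n E. \<mu> p * (y (fst p) * y (snd p)))"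
      using arcs_subset by (intro sum.cong refl) (auto simp: outer_def)
    ultimately show "a * (\<Sum>i\<in>{1..n}. y i)\<^sup>2 - (\<Sum>p\<in>arcs n E. \<mu> p * (y (fst p) * y (snd p)))
        \<le> a * (k - \<phi> / a)"
      using a by (simp add: right_diff_distrib)
  qed
  moreover have "k - \<phi> / a < k" using a \<open>0 < \<phi>\<close> by simp
  ultimately show ?thesis by blast
qed

lemma primal_witness_for_theta2:
  assumes n: "1 \<le> n" and G: "graph_on n E"
  shows "\<exists>B\<in>spectraplex n. (\<forall>p\<in>arcs n E. B p \<le> 0) \<and> theta2 n E \<le> (\<Sum>p\<in>{1..n} \<times> {1..n}. B p)"
proof (rule ccontr)
  assume "\<not> ?thesis"
  then obtain t where t: "t < theta2 n E" "dual_feasible n E t"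
    using dual_feasible_if_no_primal_witness[OF n G] by blast
  define t' where "t' = (t + theta2 n E) / 2"
  have "1 \<le> t" by (rule dual_feasible_ge_1[OF G n t(2)])
  then have "1 < t'" "t \<le> t'" "t' < theta2 n E"
    using t(1) unfolding t'_def by auto
  then obtain u where "rigid_vector_coloring n (complement n E) t' u"
    using rigid_vector_coloring_if_dual_feasible[OF G _ dual_feasible_mono[OF t(2)]] by blast
  then show False
    using theta2_le_coloring \<open>1 < t'\<close> \<open>t' < theta2 n E\<close> by fastforce
qed

section \<open>Attaining theta2\<close>

lemma ip_vec_sum_nonneg_if_extremal:
  assumes "finite I" "i \<in> I" "-1 \<le> k"
    and "ip d (vec_sum I w) (vec_sum I w) = k * (\<Sum>j\<in>I. ip d (w j) (w j))"
    and "ip d (vec_sum (I - {i}) w) (vec_sum (I - {i}) w) \<le> k * (\<Sum>j\<in>I - {i}. ip d (w j) (w j))"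
  shows "0 \<le> ip d (vec_sum I w) (w i)"
proof -
  have "(\<Sum>j\<in>I - {i}. ip d (w j) (w j)) = (\<Sum>j\<in>I. ip d (w j) (w j)) - ip d (w i) (w i)"
    using sum.remove[OF assms(1,2), of "\<lambda>j. ip d (w j) (w j)"] by simp
  then have "ip d (vec_sum I w) (vec_sum I w) - 2 * ip d (vec_sum I w) (w i) + ip d (w i) (w i)
      \<le> k * ((\<Sum>j\<in>I. ip d (w j) (w j)) - ip d (w i) (w i))"
    using assms(5) unfolding vec_sum_remove[OF assms(1,2)] ip_diff_self by simp
  then have "(1 + k) * ip d (w i) (w i) \<le> 2 * ip d (vec_sum I w) (w i)"
    using assms(4) by (simp add: algebra_simps)
  moreover have "0 \<le> (1 + k) * ip d (w i) (w i)"
    using assms(3) by (simp add: ip_self_nonneg)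
  ultimately show ?thesis by simp
qed

lemma cfun_lower_bound:
  assumes "ip d y y = k" "0 < k"
  shows "2 * ip d y x - k * ip d x x \<le> cfun d x y"
proof (cases "ip d x x = 0")
  case True
  then show ?thesis
    using ip_eq_0_if_self_eq_0[OF True, of y] by (simp add: cfun_def ip_commute)
next
  case False
  then have x: "0 < ip d x x" using ip_self_nonneg[of d x] by simp
  have "0 \<le> (ip d y x - k * ip d x x)\<^sup>2" by simp
  then have "(2 * ip d y x - k * ip d x x) * (ip d x x * k) \<le> (ip d x y)\<^sup>2"
    by (simp add: power2_eq_square algebra_simps ip_commute[of d x y])
  then show ?thesis
    using x assms False by (simp add: cfun_def pos_le_divide_eq)
qed

lemma theta2_in_theta2'_values:
  assumes n: "1 \<le> n" and G: "graph_on n E" and B: "B \<in> spectraplex n"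
    and B_arcs: "\<forall>p\<in>arcs n E. B p \<le> 0" and B_sum: "theta2 n E \<le> (\<Sum>p\<in>{1..n} \<times> {1..n}. B p)"
  shows "theta2 n E \<in> theta2'_values n E"
proof -
  let ?\<theta> = "theta2 n E"
  obtain b where b: "\<forall>i\<in>{1..n}. \<forall>j\<in>{1..n}. ip n (b i) (b j) = B (i, j)"
    using B psd_on_Gram_factorization[of "{1..n}" "curry B"] unfolding spectraplex_def by auto
  define S where "S = vec_sum {1..n} b"
  have trace: "(\<Sum>i\<in>{1..n}. ip n (b i) (b i)) = 1"
    using B b unfolding spectraplex_def by simp
  have bE: "\<forall>i\<in>{1..n}. \<forall>j\<in>{1..n}. {i, j} \<in> E \<longrightarrow> ip n (b i) (b j) \<le> 0"
    using B_arcs b unfolding arcs_def by auto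
  have "ip n S S = (\<Sum>p\<in>{1..n} \<times> {1..n}. B p)"
    unfolding S_def ip_vec_sum_self sum.cartesian_product using b by (auto intro!: sum.cong)
  moreover have "ip n S S \<le> ?\<theta>"
    using norm_sum_le_theta2[OF G _ bE] trace unfolding S_def by simp
  ultimately have SS: "ip n S S = ?\<theta>" using B_sum by simp
  have Sb: "0 \<le> ip n S (b i)" if "i \<in> {1..n}" for i
    unfolding S_def
  proof (rule ip_vec_sum_nonneg_if_extremal)
    show "ip n (vec_sum ({1..n} - {i}) b) (vec_sum ({1..n} - {i}) b)
        \<le> ?\<theta> * (\<Sum>j\<in>{1..n} - {i}. ip n (b j) (b j))"
      by (rule norm_sum_le_theta2[OF G]) (use bE in auto)
  qed (use that theta2_ge_1[OF G] SS trace in \<open>auto simp: S_def\<close>)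
  define v where "v i = (if i = 0 then S else b i)" for i
  have "\<forall>i\<in>{1..n}. 0 \<le> ip n (v 0) (v i)"
    and "\<forall>i\<in>{1..n}. \<forall>j\<in>{1..n}. {i, j} \<in> E \<longrightarrow> ip n (v i) (v j) \<le> 0"
    using Sb bE by (auto simp: v_def)
  then have in_values: "(\<Sum>i=1..n. cfun n (v i) (v 0)) \<in> theta2'_values n E"
    unfolding theta2'_values_def using n by blast
  have "?\<theta> = (\<Sum>i\<in>{1..n}. 2 * ip n S (b i) - ?\<theta> * ip n (b i) (b i))"
    using SS trace unfolding sum_subtractf sum_distrib_left[symmetric] S_def ip_vec_sum_right
    by (simp add: S_def)
  also have "\<dots> \<le> (\<Sum>i=1..n. cfun n (v i) (v 0))"
    using SS theta2_ge_1[OF G] by (intro sum_mono) (auto simp: v_def intro: cfun_lower_bound)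
  finally have "?\<theta> \<le> (\<Sum>i=1..n. cfun n (v i) (v 0))" .
  with in_values theta2'_value_le_theta2[OF G in_values] show ?thesis by simp
qed

theorem lemma2:
  fixes n :: nat and E :: "nat set set"
  assumes "n \<ge> 1" and "graph_on n E"
  shows "theta2' n E \<in> theta2'_values n E \<and> theta2 n E = theta2' n E"
proof -
  obtain B where "B \<in> spectraplex n" "\<forall>p\<in>arcs n E. B p \<le> 0"
      "theta2 n E \<le> (\<Sum>p\<in>{1..n} \<times> {1..n}. B p)"
    using primal_witness_for_theta2[OF assms] by blast
  then have attained: "theta2 n E \<in> theta2'_values n E"
    using theta2_in_theta2'_values[OF assms] by blast
  have "theta2' n E = theta2 n E"
    unfolding theta2'_def
    by (rule cSup_eq_maximum[OF attained theta2'_value_le_theta2[OF assms(2)]])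
  then show ?thesis using attained by simp
qed

end
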